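(* Let $p,q\geq2$ be relatively prime integers with $p\geq 2q-1$. Then $Z_{p/q}(X_{p,q})\neq\emptyset$, where $X_{p,q}=\bigcup_{a\in D_{p,q}}\left[\frac{a}{pq},\frac{a+1}{pq}\right)$.
   Context: For an integer $n>1$, $A_n=\{0,1,\dots,n-1\}$. For every $d\in A_q$ let $k_d\in A_p$ be the unique element with $k_dq\equiv d\pmod p$, and $D_{p,q}=\{a\in A_{pq}\mid a\equiv k_d\pmod p\text{ for some }d\in A_q\}$. For $x\in\mathbb{R}$, $\{x\}=x-\lfloor x\rfloor$; for $S\subseteq[0,1)$, $Z_{p/q}(S)=\{\xi>0\mid \{\xi(p/q)^i\}\in S\text{ for every }i\in\mathbb{N}\}$ with $\mathbb{N}=\{0,1,2,\dots\}$. *)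

theory Defs
  imports "HOL-Analysis.Analysis"
begin

definition A_set :: "nat \<Rightarrow> nat set" where
  "A_set n = {0..<n}"

definition kd :: "nat \<Rightarrow> nat \<Rightarrow> nat \<Rightarrow> nat" where
  "kd p q d = (THE k. k \<in> A_set p \<and> (k * q) mod p = d mod p)"

definition D_set :: "nat \<Rightarrow> nat \<Rightarrow> nat set" where
  "D_set p q = {a \<in> A_set (p * q). \<exists>d \<in> A_set q. a mod p = kd p q d mod p}"

definition fracpart :: "real \<Rightarrow> real" where
  "fracpart x = x - of_int \<lfloor>x\<rfloor>"

definition Z_set :: "real \<Rightarrow> real set \<Rightarrow> real set" where
  "Z_set r S = {\<xi>. \<xi> > 0 \<and> (\<forall>i::nat. fracpart (\<xi> * r ^ i) \<in> S)}"

definition X_set :: "nat \<Rightarrow> nat \<Rightarrow> real set" where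
  "X_set p q = (\<Union>a \<in> D_set p q. {real a / real (p * q) ..< (real a + 1) / real (p * q)})"

end

theory Submission
  imports Defs "HOL-Number_Theory.Cong"
begin

text \<open>
  Let r = p/q and iterate N \<mapsto> \<lceil>pN/q\<rceil> starting from N(0) = p. Then N(i) r \<le> N(i+1),
  and the hypothesis p \<ge> 2q - 1 gives N(i+1) + 1 \<le> (N(i) + 1) r, so the intervals
  [N(i), N(i) + 1] / r^i are nested and share a point s. The point s r^i never reaches the right
  endpoint: otherwise (N(i) + 1) r^m would be an integer for every m, which the coprimality of
  p and q forbids. Hence \<lfloor>s r^i\<rfloor> = N(i) for all i. Every N(i) satisfies N(i) q mod p < q,
  because N(i) q exceeds p N(i-1) by less than q, and this is exactly the condition
  N(i) mod pq \<in> D(p,q). So \<xi> = s/(pq) lies in Z(p/q, X(p,q)).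
\<close>

lemma kd_mult_mod:
  fixes p q k :: nat
  assumes "coprime p q" and "k < p"
  shows "kd p q (k * q mod p) = k"
  unfolding kd_def
proof (rule the_equality)
  show "k \<in> A_set p \<and> k * q mod p = k * q mod p mod p"
    using assms(2) by (simp add: A_set_def)
next
  fix k' assume "k' \<in> A_set p \<and> k' * q mod p = k * q mod p mod p"
  then have "k' < p" and "[k' * q = k * q] (mod p)"
    by (simp_all add: A_set_def cong_def)
  moreover have "coprime q p"
    using assms(1) by (simp add: coprime_commute)
  ultimately show "k' = k"
    using assms(2) cong_mult_rcancel_nat cong_less_modulus_unique_nat by blast
qed

lemma mem_D_set:
  fixes p q a :: nat
  assumes "coprime p q" and "0 < p" and "a < p * q" and "a * q mod p < q"
  shows "a \<in> D_set p q"
proof -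
  have "kd p q (a * q mod p) = a mod p"
    using kd_mult_mod[OF assms(1), of "a mod p"] assms(2) by (simp add: mod_mult_left_eq)
  then show ?thesis
    using assms(3,4) unfolding D_set_def A_set_def by force
qed

lemma fracpart_mem_X_set:
  fixes p q N :: nat and x :: real
  assumes "coprime p q" and "0 < p" and "0 < q"
    and "real N \<le> real (p * q) * x" and "real (p * q) * x < real N + 1"
    and "N * q mod p < q"
  shows "fracpart x \<in> X_set p q"
proof -
  define P where "P = p * q"
  define a where "a = N mod P"
  define m where "m = N div P"
  have P: "0 < P" using assms(2,3) unfolding P_def by simp
  have a: "a < P" using P unfolding a_def by simp
  have N: "real N = real P * real m + real a"
    unfolding a_def m_def by (metis div_mult_mod_eq mult.commute of_nat_add of_nat_mult)
  have lo: "real a / real P \<le> x - real m" and hi: "x - real m < (real a + 1) / real P"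
    using assms(4,5) P N unfolding P_def by (simp_all add: field_simps)
  have "0 \<le> real a / real P" and "(real a + 1) / real P \<le> 1"
    using a P by simp_all
  with lo hi have "0 \<le> x - real m" and "x - real m < 1"
    by linarith+
  then have "fracpart x = x - real m"
    unfolding fracpart_def frac_def[symmetric] by (simp add: frac_unique_iff)
  moreover have "a \<in> D_set p q"
  proof (rule mem_D_set[OF assms(1,2)])
    show "a < p * q" using a unfolding P_def .
    have "a mod p = N mod p" unfolding a_def P_def by (simp add: mod_mod_cancel)
    then show "a * q mod p < q"
      using assms(6) by (metis mod_mult_left_eq)
  qed
  ultimately show ?thesis
    using lo hi unfolding X_set_def P_def by auto
qed

definition ceil_scale :: "nat \<Rightarrow> nat \<Rightarrow> nat \<Rightarrow> nat" where
  "ceil_scale p q N = (p * N + q - 1) div q"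

lemma ceil_scale_excess:
  fixes p q N :: nat
  assumes "0 < q"
  obtains e where "e < q" and "q * ceil_scale p q N = p * N + e"
proof
  define X where "X = p * N + q - 1"
  have "q * ceil_scale p q N = X - X mod q"
    unfolding ceil_scale_def X_def by (simp add: minus_mod_eq_mult_div)
  moreover have "X mod q \<le> q - 1"
    using mod_less_divisor[OF assms, of X] by linarith
  ultimately show "q * ceil_scale p q N = p * N + (q - 1 - X mod q)"
    unfolding X_def using assms by simp
qed (use assms in simp)

lemma ceil_scale_bounds:
  fixes p q N :: nat
  assumes "0 < q" and "2 * q - 1 \<le> p"
  shows "p * N \<le> q * ceil_scale p q N" and "q * (ceil_scale p q N + 1) \<le> p * (N + 1)"
proof -
  obtain e where "e < q" and "q * ceil_scale p q N = p * N + e"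
    using ceil_scale_excess[OF assms(1)] .
  with assms show "p * N \<le> q * ceil_scale p q N" and "q * (ceil_scale p q N + 1) \<le> p * (N + 1)"
    by (simp_all add: algebra_simps)
qed

lemma ceil_scale_residue:
  fixes p q N :: nat
  assumes "0 < q" and "q \<le> p"
  shows "ceil_scale p q N * q mod p < q"
proof -
  obtain e where "e < q" and "q * ceil_scale p q N = p * N + e"
    using ceil_scale_excess[OF assms(1)] .
  with assms(2) show ?thesis
    by (simp add: mult.commute)
qed

lemma nested_scaled_intervals:
  fixes a b :: "nat \<Rightarrow> real" and r :: real
  assumes "0 < r" and "\<And>i. a i \<le> b i"
    and "\<And>i. a i * r \<le> a (Suc i)" and "\<And>i. b (Suc i) \<le> b i * r"
  obtains s where "\<And>i. a i \<le> s * r ^ i" and "\<And>i. s * r ^ i \<le> b i"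
proof -
  define lo where "lo i = a i / r ^ i" for i
  define hi where "hi i = b i / r ^ i" for i
  have inc: "incseq lo"
  proof (rule incseq_SucI)
    fix i
    show "lo i \<le> lo (Suc i)"
      using assms(1) divide_right_mono[OF assms(3)[of i], of "r ^ Suc i"]
      unfolding lo_def by simp
  qed
  have dec: "decseq hi"
  proof (rule decseq_SucI)
    fix i
    show "hi (Suc i) \<le> hi i"
      using assms(1) divide_right_mono[OF assms(4)[of i], of "r ^ Suc i"]
      unfolding hi_def by simp
  qed
  have lo_le_hi: "lo k \<le> hi i" for k i
  proof -
    have "lo k \<le> lo (max k i)" using inc by (simp add: incseq_def)
    also have "\<dots> \<le> hi (max k i)"
      unfolding lo_def hi_def using assms(1,2) by (simp add: divide_right_mono)
    also have "\<dots> \<le> hi i" using dec by (simp add: decseq_def)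
    finally show ?thesis .
  qed
  define s where "s = Sup (range lo)"
  have "lo i \<le> s" for i
    unfolding s_def using lo_le_hi by (intro cSup_upper bdd_aboveI) auto
  moreover have "s \<le> hi i" for i
    unfolding s_def using lo_le_hi by (intro cSup_least) auto
  ultimately show ?thesis
    using assms(1) by (intro that[of s]) (simp_all add: lo_def hi_def divide_le_eq le_divide_eq)
qed

lemma scaled_upper_endpoint_propagates:
  fixes b :: "nat \<Rightarrow> real" and r s :: real
  assumes "\<And>j. s * r ^ j \<le> b j" and "\<And>j. b (Suc j) \<le> b j * r"
    and "s * r ^ i = b i"
  shows "s * r ^ (i + m) = b (i + m)"
proof (induction m)
  case (Suc m)
  have "s * r ^ (i + Suc m) = s * r ^ (i + m) * r" by (simp add: ac_simps)
  also have "\<dots> = b (i + m) * r" using Suc.IH by (simp only:)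
  finally show ?case
    using assms(1)[of "i + Suc m"] assms(2)[of "i + m"] unfolding add_Suc_right by linarith
qed (use assms(3) in simp)

lemma integer_times_powers_not_all_Nats:
  fixes p q M :: nat
  assumes "coprime p q" and "2 \<le> q" and "0 < M"
  shows "\<exists>m. real M * (real p / real q) ^ m \<notin> \<nat>"
proof (rule ccontr)
  assume "\<not> ?thesis"
  then obtain n where "real M * (real p / real q) ^ M = real n"
    by (metis Nats_cases)
  then have "real (M * p ^ M) = real (n * q ^ M)"
    using assms(2) by (simp add: power_divide field_simps)
  then have "q ^ M dvd M * p ^ M"
    by (metis dvd_triv_right of_nat_eq_iff)
  moreover have "coprime (q ^ M) (p ^ M)"
    using assms(1) by (simp add: coprime_commute)
  ultimately have "q ^ M \<le> M"
    using assms(3) by (simp add: coprime_dvd_mult_left_iff dvd_imp_le)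
  moreover have "M < 2 ^ M" by (rule less_exp)
  moreover have "(2::nat) ^ M \<le> q ^ M" using assms(2) by (simp add: power_mono)
  ultimately show False by linarith
qed

definition ceil_scale_orbit :: "nat \<Rightarrow> nat \<Rightarrow> nat \<Rightarrow> nat" where
  "ceil_scale_orbit p q i = (ceil_scale p q ^^ i) p"

lemma ceil_scale_orbit_residue:
  fixes p q i :: nat
  assumes "0 < q" and "q \<le> p"
  shows "ceil_scale_orbit p q i * q mod p < q"
proof (cases i)
  case 0
  then show ?thesis using assms by (simp add: ceil_scale_orbit_def)
next
  case (Suc j)
  then show ?thesis
    using ceil_scale_residue[OF assms] by (simp add: ceil_scale_orbit_def)
qed

lemma ceil_scale_orbit_is_floor_orbit:
  fixes p q :: nat
  assumes "coprime p q" and "2 \<le> q" and "2 * q - 1 \<le> p"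
  obtains s :: real where "0 < s"
    and "\<And>i. real (ceil_scale_orbit p q i) \<le> s * (real p / real q) ^ i"
    and "\<And>i. s * (real p / real q) ^ i < real (ceil_scale_orbit p q i) + 1"
proof -
  define r where "r = real p / real q"
  define a where "a i = real (ceil_scale_orbit p q i)" for i
  define b where "b i = a i + 1" for i
  have r: "0 < r" using assms(2,3) unfolding r_def by simp
  have step: "ceil_scale_orbit p q (Suc i) = ceil_scale p q (ceil_scale_orbit p q i)" for i
    by (simp add: ceil_scale_orbit_def)
  have "a i * r \<le> a (Suc i)" and "b (Suc i) \<le> b i * r" for i
    using ceil_scale_bounds[OF _ assms(3), of "ceil_scale_orbit p q i"] assms(2)
    unfolding a_def b_def r_def step
    by (simp_all add: field_simps flip: of_nat_mult of_nat_add of_nat_le_iff)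
  then obtain s where lo: "\<And>i. a i \<le> s * r ^ i" and up: "\<And>i. s * r ^ i \<le> b i"
    using nested_scaled_intervals[OF r, of a b] unfolding b_def by auto
  have "s * r ^ i < b i" for i
  proof (rule ccontr)
    assume "\<not> s * r ^ i < b i"
    then have "s * r ^ i = b i" using up[of i] by simp
    then have "s * r ^ (i + m) = b (i + m)" for m
      by (rule scaled_upper_endpoint_propagates[OF up \<open>\<And>i. b (Suc i) \<le> b i * r\<close>])
    moreover have "real (ceil_scale_orbit p q i + 1) * r ^ m = s * r ^ (i + m)" for m
      using \<open>s * r ^ i = b i\<close> unfolding b_def a_def by (simp add: power_add mult.assoc)
    ultimately have "real (ceil_scale_orbit p q i + 1) * r ^ m \<in> \<nat>" for m
      unfolding b_def a_def by simp
    then show False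
      using integer_times_powers_not_all_Nats[OF assms(1,2), of "ceil_scale_orbit p q i + 1"]
      unfolding r_def by simp
  qed
  moreover have "0 < s"
    using lo[of 0] assms(2,3) unfolding a_def by (simp add: ceil_scale_orbit_def)
  ultimately show ?thesis
    using that lo unfolding a_def b_def r_def by blast
qed

theorem corollary2:
  fixes p q :: nat
  assumes "p \<ge> 2" and "q \<ge> 2" and "coprime p q" and "p \<ge> 2 * q - 1"
  shows "Z_set (real p / real q) (X_set p q) \<noteq> {}"
proof -
  obtain s where s: "0 < s"
    and lo: "\<And>i. real (ceil_scale_orbit p q i) \<le> s * (real p / real q) ^ i"
    and hi: "\<And>i. s * (real p / real q) ^ i < real (ceil_scale_orbit p q i) + 1"
    using ceil_scale_orbit_is_floor_orbit[OF assms(3,2,4)] by blast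
  define \<xi> where "\<xi> = s / real (p * q)"
  have scale: "real (p * q) * (\<xi> * (real p / real q) ^ i) = s * (real p / real q) ^ i" for i
    using assms(1,2) unfolding \<xi>_def by simp
  have "fracpart (\<xi> * (real p / real q) ^ i) \<in> X_set p q" for i
  proof (rule fracpart_mem_X_set[OF assms(3)])
    show "real (ceil_scale_orbit p q i) \<le> real (p * q) * (\<xi> * (real p / real q) ^ i)"
      unfolding scale by (rule lo)
    show "real (p * q) * (\<xi> * (real p / real q) ^ i) < real (ceil_scale_orbit p q i) + 1"
      unfolding scale by (rule hi)
    show "ceil_scale_orbit p q i * q mod p < q"
      using assms(2,4) by (intro ceil_scale_orbit_residue) simp_all
  qed (use assms(1,2) in simp_all)
  moreover have "0 < \<xi>"
    using s assms(1,2) unfolding \<xi>_def by simp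
  ultimately have "\<xi> \<in> Z_set (real p / real q) (X_set p q)"
    unfolding Z_set_def by blast
  then show ?thesis by blast
qed

end
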